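(* Let $q=2^n$. For all $c\in{\mathbb F}_q$, $$\prod_{a\in\mathcal T_0}(c+a)+\prod_{b\in\mathcal T_1}(c+b)=c^{1/2}.$$
   Context: For $j\in\{0,1\}$, $\mathcal T_j=\{a\in{\mathbb F}_q^\times:\mathrm{Tr}_{{\mathbb F}_q/{\mathbb F}_2}(1/a)=j\}$. Here $c^{1/2}$ denotes the unique square root of $c$ in ${\mathbb F}_q$. *)

theory Defs
  imports Main
begin

text \<open>Absolute trace from F_q to F_2, where q = 2^n: Tr(x) = sum of x^(2^i), i < n.
  Its values lie in the prime field {0,1} of the ambient field.\<close>
definition abs_trace :: "nat \<Rightarrow> 'a::field \<Rightarrow> 'a" where
  "abs_trace n x = (\<Sum>i<n. x ^ (2 ^ i))"

definition trace_set :: "nat \<Rightarrow> 'a::field \<Rightarrow> 'a set" where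
  "trace_set n j = {a. a \<noteq> 0 \<and> abs_trace n (inverse a) = j}"

text \<open>The unique square root c^(1/2) (unique in characteristic 2 finite fields).\<close>
definition half_root :: "'a::field \<Rightarrow> 'a" where
  "half_root c = (THE r. r ^ 2 = c)"

end

theory Submission
  imports Defs "HOL-Computational_Algebra.Polynomial" "HOL-Computational_Algebra.Primes"
begin

text \<open>The trace is the polynomial function \<open>T(X) = \<Sum>\<^sub>i X^(2^i)\<close> of degree \<open>q/2\<close>. Its two
  fibres \<open>Tr = 0\<close> and \<open>Tr = 1\<close> partition \<open>\<bbbF>\<^sub>q\<close> and each has at most \<open>q/2\<close> elements, so
  \<open>T = \<Prod>\<^bsub>Tr x = 0\<^esub>(X + x)\<close> and \<open>T + 1 = \<Prod>\<^bsub>Tr x = 1\<^esub>(X + x)\<close>. Comparing the coefficient of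
  \<open>X\<close>, resp. the constant term, shows that the nonzero roots of \<open>T\<close>, resp. the roots of
  \<open>T + 1\<close>, have product 1. For \<open>c \<noteq> 0\<close> write \<open>c + 1/x = c (1/c + x) / x\<close>: the two products
  of the theorem become \<open>c^(q/2) Tr(1/c)\<close> and \<open>c^(q/2) (Tr(1/c) + 1)\<close>, whose sum is
  \<open>c^(q/2) = c^(1/2)\<close>. For \<open>c = 0\<close> both products are 1 and their sum is \<open>0\<close>.\<close>

lemma power_card_UNIV_eq:
  fixes x :: "'a::{field,finite}"
  shows "x ^ card (UNIV :: 'a set) = x"
proof (cases "x = 0")
  case False
  let ?U = "UNIV - {0::'a}"
  have "(\<Prod>y\<in>?U. x * y) = (\<Prod>y\<in>?U. y)"
    by (rule prod.reindex_bij_witness [of _ "\<lambda>y. y / x" "\<lambda>y. x * y"]) (use False in auto)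
  then have "x ^ card ?U * (\<Prod>y\<in>?U. y) = 1 * (\<Prod>y\<in>?U. y)"
    by (simp add: prod.distrib)
  moreover have "(\<Prod>y\<in>?U. y) \<noteq> 0"
    by simp
  ultimately have "x ^ card ?U = 1"
    by (metis mult_right_cancel)
  moreover have "card (UNIV :: 'a set) = Suc (card ?U)"
    using finite_UNIV_card_ge_0 [where 'a = 'a] by (simp add: card_Diff_singleton)
  ultimately show ?thesis
    by (metis power_Suc mult.right_neutral)
qed (simp add: finite_UNIV_card_ge_0)

lemma of_nat_card_UNIV_eq_0: "of_nat (card (UNIV :: 'a::{comm_ring_1,finite} set)) = (0::'a)"
proof -
  have "(\<Sum>x\<in>UNIV. x + 1) = (\<Sum>x\<in>UNIV. x::'a)"
    by (rule sum.reindex_bij_witness [of _ "\<lambda>x. x - 1" "\<lambda>x. x + 1"]) auto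
  then show ?thesis
    by (simp add: sum.distrib)
qed

lemma CHAR_eq_2_if_card_UNIV_eq_power2:
  assumes "card (UNIV :: 'a::{field,finite} set) = 2 ^ n"
  shows "CHAR('a) = 2"
proof -
  have "prime CHAR('a)"
    by (simp add: finite_imp_CHAR_pos prime_CHAR_semidom)
  moreover have "CHAR('a) dvd 2 ^ n"
    using of_nat_card_UNIV_eq_0 assms by (metis of_nat_eq_0_iff_char_dvd)
  ultimately show ?thesis
    by (metis prime_dvd_power primes_dvd_imp_eq two_is_prime_nat)
qed

lemma poly_eq_prod_roots:
  fixes p :: "'a::field poly"
  assumes "finite S" and "degree p \<le> card S" and "coeff p (card S) = 1"
    and "\<And>x. x \<in> S \<Longrightarrow> poly p x = 0"
  shows "p = (\<Prod>x\<in>S. [:-x, 1:])"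
proof (rule poly_eqI_degree_lead_coeff [of p "card S" _ S])
  have "degree (\<Prod>x\<in>S. [:-x, 1:]) = card S"
    by (subst degree_prod_eq_sum_degree) auto
  moreover have "lead_coeff (\<Prod>x\<in>S. [:-x, 1:]) = 1"
    by (simp add: lead_coeff_prod)
  ultimately show "coeff p (card S) = coeff (\<Prod>x\<in>S. [:-x, 1:]) (card S)"
    and "degree (\<Prod>x\<in>S. [:-x, 1:]) \<le> card S"
    using assms(3) by simp_all
  fix z
  assume "z \<in> S"
  then show "poly p z = poly (\<Prod>x\<in>S. [:-x, 1:]) z"
    using assms(1,4) by (auto simp: poly_prod intro: prod_zero)
qed (use assms in simp_all)

lemma prod_Diff_0_add_inverse:
  fixes c :: "'a::field"
  assumes "finite S" and "c \<noteq> 0"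
  shows "(\<Prod>x\<in>S - {0}. c + inverse x) = c ^ card S * (\<Prod>x\<in>S. inverse c + x) / \<Prod>(S - {0})"
proof -
  have "(\<Prod>x\<in>S - {0}. c + inverse x) = (\<Prod>x\<in>S - {0}. c * (inverse c + x) / x)"
  proof (rule prod.cong)
    fix x
    assume "x \<in> S - {0}"
    then have "x \<noteq> 0"
      by simp
    with assms(2) show "c + inverse x = c * (inverse c + x) / x"
      by (simp add: field_simps)
  qed simp
  also have "\<dots> = c ^ card (S - {0}) * (\<Prod>x\<in>S - {0}. inverse c + x) / \<Prod>(S - {0})"
    by (simp add: prod_dividef prod.distrib)
  also have "c ^ card (S - {0}) * (\<Prod>x\<in>S - {0}. inverse c + x) = c ^ card S * (\<Prod>x\<in>S. inverse c + x)"
  proof (cases "0 \<in> S")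
    case True
    then have "card S = Suc (card (S - {0}))"
      and "(\<Prod>x\<in>S. inverse c + x) = inverse c * (\<Prod>x\<in>S - {0}. inverse c + x)"
      using assms(1) by (simp_all only: card_Suc_Diff1 prod.remove add_0_right)
    with assms(2) show ?thesis
      by simp
  qed simp
  finally show ?thesis .
qed

lemma prod_trace_set:
  "(\<Prod>a\<in>trace_set n j. f a) = (\<Prod>x\<in>{x. abs_trace n x = j} - {0}. f (inverse x))"
proof -
  have "trace_set n j = inverse ` ({x. abs_trace n x = j} - {0})"
    unfolding trace_set_def
  proof (intro set_eqI iffI)
    fix a
    assume "a \<in> {a. a \<noteq> 0 \<and> abs_trace n (inverse a) = j}"
    then show "a \<in> inverse ` ({x. abs_trace n x = j} - {0})"
      by (intro image_eqI [of a inverse "inverse a"]) auto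
  qed auto
  moreover have "inj_on inverse ({x. abs_trace n x = j} - {0})"
    by (rule inj_onI) simp
  ultimately show ?thesis
    by (simp add: prod.reindex)
qed

lemma abs_trace_0 [simp]: "abs_trace n 0 = 0"
  by (simp add: abs_trace_def power_0_left)

definition trace_poly :: "nat \<Rightarrow> 'a::comm_ring_1 poly" where
  "trace_poly n = (\<Sum>i<n. monom 1 (2 ^ i))"

lemma poly_trace_poly: "poly (trace_poly n) x = abs_trace n x"
  by (simp add: trace_poly_def abs_trace_def poly_sum poly_monom)

lemma coeff_trace_poly_power2:
  assumes "i < n"
  shows "coeff (trace_poly n) (2 ^ i) = 1"
proof -
  have "coeff (trace_poly n) (2 ^ i) = (\<Sum>k<n. if k = i then 1 else 0)"
    unfolding trace_poly_def coeff_sum coeff_monom by (intro sum.cong) auto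
  then show ?thesis
    using assms by simp
qed

lemma degree_trace_poly: "degree (trace_poly n) \<le> 2 ^ (n - 1)"
  unfolding trace_poly_def
  by (intro degree_sum_le) (auto simp: degree_monom_eq intro: power_increasing)

context
  fixes n :: nat
  assumes card_UNIV: "card (UNIV :: 'a::{field,finite} set) = 2 ^ n"
begin

lemma CHAR_eq_2: "CHAR('a) = 2"
  using card_UNIV by (rule CHAR_eq_2_if_card_UNIV_eq_power2)

lemma two_eq_0: "(2::'a) = 0"
  using of_nat_CHAR [where 'a = 'a] by (simp add: CHAR_eq_2)

lemma exponent_ge_1: "n \<ge> 1"
proof (rule ccontr)
  assume "\<not> n \<ge> 1"
  then have "card (UNIV :: 'a set) = 1"
    using card_UNIV by simp
  moreover have "card {0::'a, 1} \<le> card (UNIV :: 'a set)"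
    by (rule card_mono) auto
  ultimately show False
    by simp
qed

lemma card_UNIV_eq_double: "card (UNIV :: 'a set) = 2 * 2 ^ (n - 1)"
  using card_UNIV exponent_ge_1 by (simp flip: power_Suc)

lemma coeff_trace_poly_minus_const: "coeff (trace_poly n - [:j::'a:]) (2 ^ (n - 1)) = 1"
proof -
  obtain k where "2 ^ (n - 1) = Suc k"
    using not0_implies_Suc by (metis power_not_zero zero_neq_numeral)
  then show ?thesis
    using coeff_trace_poly_power2 [of "n - 1" n] exponent_ge_1 by simp
qed

lemma degree_trace_poly_minus_const: "degree (trace_poly n - [:j::'a:]) \<le> 2 ^ (n - 1)"
  by (rule degree_diff_le [OF degree_trace_poly]) simp

lemma abs_trace_power2: "abs_trace n (x::'a) ^ 2 = abs_trace n x"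
proof -
  have "abs_trace n x ^ 2 = (\<Sum>i<n. x ^ 2 ^ Suc i)"
    unfolding abs_trace_def
    by (subst freshmans_dream_sum' [where n = 1]) (simp_all add: CHAR_eq_2 mult.commute
        flip: power_mult)
  also have "\<dots> = (\<Sum>i<n. x ^ 2 ^ i)"
  proof -
    have "x ^ 2 ^ n = x"
      using power_card_UNIV_eq [of x] unfolding card_UNIV .
    then have "x + (\<Sum>i<n. x ^ 2 ^ Suc i) = (\<Sum>i<n. x ^ 2 ^ i) + x"
      using sum.lessThan_Suc_shift [of "\<lambda>i. x ^ 2 ^ i" n] sum.lessThan_Suc [of "\<lambda>i. x ^ 2 ^ i" n]
      by simp
    then show ?thesis
      by (simp add: add.commute)
  qed
  finally show ?thesis
    unfolding abs_trace_def .
qed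

lemma abs_trace_eq_0_or_1: "abs_trace n (x::'a) = 0 \<or> abs_trace n x = 1"
  using abs_trace_power2 [of x] by (simp add: power2_eq_square)

lemma card_abs_trace_fibres:
  "card {x::'a. abs_trace n x = 0} = 2 ^ (n - 1)"
  "card {x::'a. abs_trace n x = 1} = 2 ^ (n - 1)"
proof -
  have bound: "card {x::'a. abs_trace n x = j} \<le> 2 ^ (n - 1)" for j
  proof -
    have "trace_poly n - [:j:] \<noteq> 0"
      using coeff_trace_poly_minus_const [of j] by auto
    then have "card {x. poly (trace_poly n - [:j:]) x = 0} \<le> degree (trace_poly n - [:j:])"
      by (rule card_poly_roots_bound)
    then show ?thesis
      using degree_trace_poly_minus_const [of j] by (simp add: poly_trace_poly)
  qed
  have "{x::'a. abs_trace n x = 0} \<union> {x. abs_trace n x = 1} = UNIV"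
    using abs_trace_eq_0_or_1 by auto
  moreover have "card ({x::'a. abs_trace n x = 0} \<union> {x. abs_trace n x = 1})
      = card {x::'a. abs_trace n x = 0} + card {x::'a. abs_trace n x = 1}"
    by (intro card_Un_disjoint) auto
  ultimately have "card {x::'a. abs_trace n x = 0} + card {x::'a. abs_trace n x = 1} = 2 * 2 ^ (n - 1)"
    using card_UNIV_eq_double by simp
  with bound [of 0] bound [of 1]
  show "card {x::'a. abs_trace n x = 0} = 2 ^ (n - 1)"
    and "card {x::'a. abs_trace n x = 1} = 2 ^ (n - 1)"
    by linarith+
qed

lemma trace_poly_minus_eq_prod:
  assumes "j = 0 \<or> j = 1"
  shows "trace_poly n - [:j:] = (\<Prod>x\<in>{x::'a. abs_trace n x = j}. [:-x, 1:])"
proof (rule poly_eq_prod_roots)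
  have card_fibre: "card {x::'a. abs_trace n x = j} = 2 ^ (n - 1)"
    using card_abs_trace_fibres assms by auto
  show "degree (trace_poly n - [:j:]) \<le> card {x::'a. abs_trace n x = j}"
    unfolding card_fibre by (rule degree_trace_poly_minus_const)
  show "coeff (trace_poly n - [:j:]) (card {x::'a. abs_trace n x = j}) = 1"
    unfolding card_fibre by (rule coeff_trace_poly_minus_const)
  show "finite {x::'a. abs_trace n x = j}"
    by simp
  fix x
  assume "x \<in> {x::'a. abs_trace n x = j}"
  then show "poly (trace_poly n - [:j:]) x = 0"
    by (simp add: poly_trace_poly)
qed

lemma prod_abs_trace_fibre_add:
  assumes "j = 0 \<or> j = 1"
  shows "(\<Prod>x\<in>{x::'a. abs_trace n x = j}. d + x) = abs_trace n d + j"
proof -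
  have "abs_trace n d - j = poly (trace_poly n - [:j:]) d"
    by (simp add: poly_trace_poly)
  also have "\<dots> = (\<Prod>x\<in>{x::'a. abs_trace n x = j}. d - x)"
    by (simp add: trace_poly_minus_eq_prod [OF assms] poly_prod)
  finally show ?thesis
    by (simp add: minus_CHAR_2 [OF CHAR_eq_2])
qed

lemma prod_nonzero_abs_trace_fibre:
  assumes "j = 0 \<or> j = 1"
  shows "\<Prod>({x::'a. abs_trace n x = j} - {0}) = 1"
  using assms
proof
  assume "j = 0"
  let ?R = "\<Prod>x\<in>{x::'a. abs_trace n x = 0} - {0}. [:-x, 1:]"
  have "trace_poly n = [:0, 1:] * ?R"
    using trace_poly_minus_eq_prod [of 0] prod.remove [of "{x::'a. abs_trace n x = 0}" 0 "\<lambda>x. [:-x, 1:]"]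
    by simp
  then have "poly ?R 0 = coeff (trace_poly n) (2 ^ 0)"
    by (simp add: poly_0_coeff_0)
  also have "\<dots> = 1"
    using coeff_trace_poly_power2 [of 0 n] exponent_ge_1 by simp
  finally show ?thesis
    using \<open>j = 0\<close> by (simp add: poly_prod uminus_CHAR_2 [OF CHAR_eq_2])
next
  assume "j = 1"
  then show ?thesis
    using prod_abs_trace_fibre_add [of 1 0] by simp
qed

lemma prod_trace_set_add:
  assumes "j = 0 \<or> j = 1" and "(c::'a) \<noteq> 0"
  shows "(\<Prod>a\<in>trace_set n j. c + a) = c ^ 2 ^ (n - 1) * (abs_trace n (inverse c) + j)"
proof -
  have "card {x::'a. abs_trace n x = j} = 2 ^ (n - 1)"
    using assms(1) card_abs_trace_fibres by auto
  then show ?thesis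
    using prod_Diff_0_add_inverse [of "{x::'a. abs_trace n x = j}" c] assms
    by (simp add: prod_trace_set prod_nonzero_abs_trace_fibre prod_abs_trace_fibre_add)
qed

lemma prod_trace_set_eq_1:
  assumes "j = 0 \<or> j = 1"
  shows "\<Prod>(trace_set n (j::'a)) = 1"
proof -
  have "\<Prod>(trace_set n j) = prod (inverse \<circ> id) ({x::'a. abs_trace n x = j} - {0})"
    using prod_trace_set [where f = id and n = n and j = j] by (simp add: comp_def)
  also have "\<dots> = 1"
    unfolding prod_inversef using prod_nonzero_abs_trace_fibre [OF assms] by simp
  finally show ?thesis .
qed

lemma half_root_eq_power: "half_root (c::'a) = c ^ 2 ^ (n - 1)"
  unfolding half_root_def
proof (rule the_equality)
  have "(c ^ 2 ^ (n - 1)) ^ 2 = c ^ card (UNIV :: 'a set)"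
    by (simp add: card_UNIV_eq_double mult.commute flip: power_mult)
  then show root: "(c ^ 2 ^ (n - 1)) ^ 2 = c"
    by (simp add: power_card_UNIV_eq)
  fix r :: 'a
  assume "r ^ 2 = c"
  have "(r + c ^ 2 ^ (n - 1)) ^ 2 = r ^ 2 + (c ^ 2 ^ (n - 1)) ^ 2"
    by (rule freshmans_dream) (simp_all add: CHAR_eq_2)
  also have "\<dots> = 2 * c"
    unfolding \<open>r ^ 2 = c\<close> root by (rule mult_2 [symmetric])
  finally have "(r + c ^ 2 ^ (n - 1)) ^ 2 = 0"
    by (simp add: two_eq_0)
  then show "r = c ^ 2 ^ (n - 1)"
    by (simp add: add_eq_0_iff2 uminus_CHAR_2 [OF CHAR_eq_2])
qed

end

theorem theorem7p8:
  fixes c :: "'a::{field,finite}" and n :: nat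
  assumes "card (UNIV :: 'a set) = 2 ^ n"
  shows "(\<Prod>a\<in>trace_set n (0::'a). c + a) + (\<Prod>b\<in>trace_set n (1::'a). c + b) = half_root c"
proof (cases "c = 0")
  case True
  have "(\<Prod>a\<in>trace_set n (j::'a). c + a) = 1" if "j = 0 \<or> j = 1" for j
    using prod_trace_set_eq_1 [OF assms that] True by simp
  moreover have "half_root c = 0"
    using half_root_eq_power [OF assms] True by simp
  moreover have "(1::'a) + 1 = 0"
    using two_eq_0 [OF assms] by simp
  ultimately show ?thesis
    by simp
next
  case False
  let ?m = "2 ^ (n - 1)" and ?t = "abs_trace n (inverse c)"
  have "c ^ ?m * (?t + 0) + c ^ ?m * (?t + 1) = c ^ ?m * (2 * ?t + 1)"
    by (simp add: algebra_simps)
  then show ?thesis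
    using prod_trace_set_add [OF assms, where j = 0 and c = c] False
      prod_trace_set_add [OF assms, where j = 1 and c = c]
      half_root_eq_power [OF assms] two_eq_0 [OF assms]
    by simp
qed

end
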